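(* (i) For $\alpha\in[0,1)$, $R_{\mathcal{S}^*_{Ne}}(\mathcal{BS}^*(\alpha))=\dfrac{4}{3+\sqrt{9+16\alpha}}$. (ii) For $\alpha\in[0,1/3]$, $R_{\mathcal{S}^*_{Ne}}(\mathcal{S}^*_L(\alpha))=\dfrac{4(2-3\alpha)}{9(1-\alpha)^2}$; in particular $R_{\mathcal{S}^*_{Ne}}(\mathcal{S}^*_L)=8/9$. (iii) For $\alpha\in[0,(3e-5)/(3e-3)]$, $R_{\mathcal{S}^*_{Ne}}(\mathcal{S}^*_{\alpha,e})=\log\dfrac{5-3\alpha}{3-3\alpha}$; in particular $R_{\mathcal{S}^*_{Ne}}(\mathcal{S}^*_e)=\log(5/3)$. Each radius is sharp, i.e. it is the exact value of the radius.
   Context: $\mathbb{D}=\{|z|<1\}$, $\mathbb{D}_r=\{|z|<r\}$. $\mathcal{A}$ is the class of analytic $f$ on $\mathbb{D}$ with $f(0)=0$, $f'(0)=1$; for $f\in\mathcal{A}$ let $\mathcal{Q}_f(z)=zf'(z)/f(z)$. For analytic $F,G$ on $\mathbb{D}$, $F\prec G$ means $F=G\circ w$ for some analytic $w:\mathbb{D}\to\mathbb{D}$ with $w(0)=0$. For analytic $\varphi$ on $\mathbb{D}$, $\mathcal{S}^*(\varphi)=\{f\in\mathcal{A}:\mathcal{Q}_f\prec\varphi\}$. Let $\varphi_{Ne}(z)=1+z-z^3/3$ (univalent on $\mathbb{D}$), $\Omega_{Ne}=\varphi_{Ne}(\mathbb{D})$, $\mathcal{S}^*_{Ne}=\mathcal{S}^*(\varphi_{Ne})$.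 For $\mathcal{G}\subset\mathcal{A}$, $R_{\mathcal{S}^*_{Ne}}(\mathcal{G})$ is the largest $\rho\in(0,1]$ such that $\mathcal{Q}_f(\mathbb{D}_\rho)\subseteq\Omega_{Ne}$ for all $f\in\mathcal{G}$ (equivalently $r^{-1}f(rz)\in\mathcal{S}^*_{Ne}$ for all $f\in\mathcal{G}$, $0<r\le\rho$). Classes (with $0\le\alpha<1$, principal branch of the square root): $\mathcal{BS}^*(\alpha)=\mathcal{S}^*\big(1+\frac{z}{1-\alpha z^2}\big)$; $\mathcal{S}^*_L(\alpha)=\mathcal{S}^*\big(\alpha+(1-\alpha)\sqrt{1+z}\big)$, $\mathcal{S}^*_L=\mathcal{S}^*_L(0)$; $\mathcal{S}^*_{\alpha,e}=\mathcal{S}^*\big(\alpha+(1-\alpha)e^z\big)$, $\mathcal{S}^*_e=\mathcal{S}^*_{0,e}$. *)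

theory Defs
  imports "HOL-Analysis.Analysis"
begin

definition classA :: "(complex \<Rightarrow> complex) set" where
  "classA = {f. f holomorphic_on ball 0 1 \<and> f 0 = 0 \<and> deriv f 0 = 1}"

text \<open>Q_f(z) = z f'(z)/f(z), with its removable value 1 at z = 0 (since f(0)=0, f'(0)=1).\<close>
definition Qf :: "(complex \<Rightarrow> complex) \<Rightarrow> complex \<Rightarrow> complex" where
  "Qf f z = (if z = 0 then 1 else z * deriv f z / f z)"

definition subord :: "(complex \<Rightarrow> complex) \<Rightarrow> (complex \<Rightarrow> complex) \<Rightarrow> bool" where
  "subord F G \<longleftrightarrow> (\<exists>w. w holomorphic_on ball 0 1 \<and> w ` ball 0 1 \<subseteq> ball 0 1 \<and> w 0 = 0
       \<and> (\<forall>z\<in>ball 0 1. F z = G (w z)))"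

definition Sstar :: "(complex \<Rightarrow> complex) \<Rightarrow> (complex \<Rightarrow> complex) set" where
  "Sstar \<phi> = {f \<in> classA. subord (Qf f) \<phi>}"

definition phiNe :: "complex \<Rightarrow> complex" where
  "phiNe z = 1 + z - z ^ 3 / 3"

definition OmegaNe :: "complex set" where
  "OmegaNe = phiNe ` ball 0 1"

definition R_Ne :: "(complex \<Rightarrow> complex) set \<Rightarrow> real" where
  "R_Ne G = (GREATEST \<rho>. \<rho> \<in> {0<..1} \<and> (\<forall>f\<in>G. Qf f ` ball 0 \<rho> \<subseteq> OmegaNe))"

definition BSstar :: "real \<Rightarrow> (complex \<Rightarrow> complex) set" where
  "BSstar \<alpha> = Sstar (\<lambda>z. 1 + z / (1 - of_real \<alpha> * z ^ 2))"

definition SLstar :: "real \<Rightarrow> (complex \<Rightarrow> complex) set" where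
  "SLstar \<alpha> = Sstar (\<lambda>z. of_real \<alpha> + of_real (1 - \<alpha>) * csqrt (1 + z))"

definition Sestar :: "real \<Rightarrow> (complex \<Rightarrow> complex) set" where
  "Sestar \<alpha> = Sstar (\<lambda>z. of_real \<alpha> + of_real (1 - \<alpha>) * exp z)"

end

theory Submission
  imports Defs "HOL-Complex_Analysis.Complex_Analysis"
begin

text \<open>
  The region \<open>\<Omega>\<^sub>N\<^sub>e\<close> contains the disc \<open>|w - 1| < 2/3\<close>, since \<open>\<phi>\<^sub>N\<^sub>e(z) = w\<close> means that \<open>z\<close> is a
  fixed point of \<open>z \<mapsto> (w - 1) + z\<^sup>3/3\<close>, a self-map of the closed unit disc; but it misses
  \<open>1/3 = \<phi>\<^sub>N\<^sub>e(-1)\<close> and \<open>5/3 = \<phi>\<^sub>N\<^sub>e(1)\<close>, which are attained by \<open>\<phi>\<^sub>N\<^sub>e\<close> only at double roots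
  on the unit circle. For \<open>f \<in> S\<^sup>*(\<phi>)\<close> Schwarz's lemma gives \<open>Q\<^sub>f(\<bbbD>\<^sub>r) \<subseteq> \<phi>(\<bbbD>\<^sub>r)\<close>, and the function
  with \<open>Q\<^sub>f = \<phi>\<close> lies in \<open>S\<^sup>*(\<phi>)\<close>. Hence the radius is \<open>r\<close> as soon as \<open>\<phi>(\<bbbD>\<^sub>r)\<close> lies in the disc
  while \<open>\<phi>\<close> takes the value \<open>1/3\<close> or \<open>5/3\<close> on \<open>|z| = r\<close>. For each of the three classes the
  bound on \<open>|\<phi>(z) - 1|\<close> over \<open>|z| = r\<close> is attained on the real axis, at \<open>z = -r\<close> (where
  \<open>\<phi> = 1/3\<close>) for the first two and at \<open>z = r\<close> (where \<open>\<phi> = 5/3\<close>) for the exponential.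
\<close>

lemma ball_subset_OmegaNe: "ball 1 (2/3) \<subseteq> OmegaNe"
proof
  fix w :: complex assume "w \<in> ball 1 (2/3)"
  hence w: "norm (w - 1) < 2/3" by (simp add: dist_norm norm_minus_commute)
  define T where "T = (\<lambda>z::complex. (w - 1) + z^3/3)"
  have T_bound: "norm (T z) \<le> norm (w - 1) + 1/3" if "norm z \<le> 1" for z
  proof -
    have "norm (z^3/3) \<le> 1/3"
      using that by (simp add: norm_divide norm_power power_le_one)
    thus ?thesis unfolding T_def by (smt (verit) norm_triangle_ineq)
  qed
  have "continuous_on (cball 0 1) T" unfolding T_def by (intro continuous_intros) auto
  moreover have "T \<in> cball 0 1 \<rightarrow> cball 0 1" using T_bound w by force
  ultimately obtain z where z: "z \<in> cball 0 1" "T z = z"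
    using brouwer_ball[of 1 0 T] by auto
  have "norm z < 1" using T_bound[of z] z w by simp
  moreover have "phiNe z = w" using z(2) unfolding phiNe_def T_def by (simp add: algebra_simps)
  ultimately show "w \<in> OmegaNe" unfolding OmegaNe_def by force
qed

lemma one_third_notin_OmegaNe: "1/3 \<notin> OmegaNe"
proof
  assume "1/3 \<in> OmegaNe"
  then obtain z :: complex where z: "norm z < 1" "phiNe z = 1/3" unfolding OmegaNe_def by auto
  have "(z + 1)^2 * (z - 2) = -3 * (phiNe z - 1/3)"
    by (simp add: phiNe_def field_simps power2_eq_square power3_eq_cube)
  hence "z = -1 \<or> z = 2" using z(2) by (auto simp: eq_neg_iff_add_eq_0)
  thus False using z(1) by auto
qed

lemma five_thirds_notin_OmegaNe: "5/3 \<notin> OmegaNe"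
proof
  assume "5/3 \<in> OmegaNe"
  then obtain z :: complex where z: "norm z < 1" "phiNe z = 5/3" unfolding OmegaNe_def by auto
  have "(z - 1)^2 * (z + 2) = -3 * (phiNe z - 5/3)"
    by (simp add: phiNe_def field_simps power2_eq_square power3_eq_cube)
  hence "z = 1 \<or> z = -2" using z(2) by (auto simp: eq_neg_iff_add_eq_0)
  thus False using z(1) by auto
qed

text \<open>The witness is \<open>f(z) = z exp (\<integral>\<^sub>0\<^sup>z (\<phi>(\<zeta>) - 1)/\<zeta> d\<zeta>)\<close>.\<close>

lemma exists_classA_Qf_eq:
  assumes hol: "\<phi> holomorphic_on ball 0 1" and phi0: "\<phi> 0 = 1"
  shows "\<exists>f\<in>classA. \<forall>z\<in>ball 0 1. Qf f z = \<phi> z"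
proof -
  define h where "h = (\<lambda>z. if z = 0 then deriv \<phi> 0 else (\<phi> z - \<phi> 0) / (z - 0))"
  have "h holomorphic_on ball 0 1" unfolding h_def
    by (rule pole_lemma[OF hol]) (simp add: interior_open)
  then obtain g where g: "\<And>x. x \<in> ball 0 1 \<Longrightarrow> (g has_field_derivative h x) (at x within ball 0 1)"
    using holomorphic_convex_primitive'[OF convex_ball open_ball] by blast
  define f where "f = (\<lambda>z. z * exp (g z - g 0))"
  have f_deriv: "(f has_field_derivative (exp (g x - g 0) + x * (h x * exp (g x - g 0)))) (at x)"
    if "x \<in> ball 0 1" for x
    using g[OF that] at_within_open[OF that open_ball] unfolding f_def
    by (auto intro!: derivative_eq_intros)
  hence "f holomorphic_on ball 0 1" unfolding holomorphic_on_open[OF open_ball] by blast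
  moreover have deriv_f: "deriv f x = exp (g x - g 0) + x * (h x * exp (g x - g 0))"
    if "x \<in> ball 0 1" for x
    using DERIV_imp_deriv[OF f_deriv[OF that]] .
  ultimately have "f \<in> classA" unfolding classA_def by (simp add: f_def)
  moreover have "Qf f z = \<phi> z" if "z \<in> ball 0 1" for z
    using deriv_f[OF that] phi0 by (simp add: Qf_def f_def h_def field_simps)
  ultimately show ?thesis by blast
qed

lemma Sstar_Qf_image_subset:
  assumes f: "f \<in> Sstar \<phi>" and r: "r \<le> 1" and sub: "\<phi> ` ball 0 r \<subseteq> S"
  shows "Qf f ` ball 0 r \<subseteq> S"
proof
  fix y assume "y \<in> Qf f ` ball 0 r"
  then obtain z where z: "norm z < r" "y = Qf f z" by auto
  obtain w where w: "w holomorphic_on ball 0 1" "w ` ball 0 1 \<subseteq> ball 0 1" "w 0 = 0"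
    "\<forall>z\<in>ball 0 1. Qf f z = \<phi> (w z)"
    using f unfolding Sstar_def subord_def by blast
  have z1: "norm z < 1" using z r by simp
  have "norm (w z) \<le> norm z"
    by (rule Schwarz_Lemma(1)[OF w(1) w(3)]) (use w(2) z1 in \<open>auto simp: image_subset_iff\<close>)
  hence "\<phi> (w z) \<in> S" using sub z(1) by auto
  thus "y \<in> S" using w(4) z z1 by simp
qed

lemma R_Ne_Sstar_eq:
  assumes hol: "\<phi> holomorphic_on ball 0 1" and phi0: "\<phi> 0 = 1" and r: "0 < r" "r \<le> 1"
    and sub: "\<phi> ` ball 0 r \<subseteq> OmegaNe"
    and sharp: "r < 1 \<Longrightarrow> \<exists>z. norm z = r \<and> \<phi> z \<notin> OmegaNe"
  shows "R_Ne (Sstar \<phi>) = r"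
  unfolding R_Ne_def
proof (rule Greatest_equality)
  show "r \<in> {0<..1} \<and> (\<forall>f\<in>Sstar \<phi>. Qf f ` ball 0 r \<subseteq> OmegaNe)"
    using r Sstar_Qf_image_subset[OF _ r(2) sub] by auto
next
  fix \<rho> assume \<rho>: "\<rho> \<in> {0<..1} \<and> (\<forall>f\<in>Sstar \<phi>. Qf f ` ball 0 \<rho> \<subseteq> OmegaNe)"
  show "\<rho> \<le> r"
  proof (rule ccontr)
    assume "\<not> \<rho> \<le> r"
    hence r_less: "r < 1" "r < \<rho>" using \<rho> by auto
    obtain z where z: "norm z = r" "\<phi> z \<notin> OmegaNe" using sharp r_less by blast
    obtain f where f: "f \<in> classA" "\<forall>z\<in>ball 0 1. Qf f z = \<phi> z"
      using exists_classA_Qf_eq[OF hol phi0] by blast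
    have "f \<in> Sstar \<phi>" unfolding Sstar_def subord_def
      using f by (intro CollectI conjI exI[of _ "\<lambda>z. z"]) auto
    moreover have "z \<in> ball 0 \<rho>" using z r_less by simp
    ultimately have "Qf f z \<in> OmegaNe" using \<rho> by blast
    thus False using f z r_less by simp
  qed
qed

lemma R_Ne_Sstar_eq_if_near_one:
  assumes "\<phi> holomorphic_on ball 0 1" "\<phi> 0 = 1" "0 < r" "r \<le> 1"
    and "\<And>u. norm u < r \<Longrightarrow> norm (\<phi> u - 1) < 2/3"
    and "\<exists>z. norm z = r \<and> \<phi> z \<notin> OmegaNe"
  shows "R_Ne (Sstar \<phi>) = r"
proof (rule R_Ne_Sstar_eq)
  show "\<phi> ` ball 0 r \<subseteq> OmegaNe"
    using assms(5) ball_subset_OmegaNe by (force simp: dist_norm norm_minus_commute)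
qed (use assms in auto)

lemma norm_div_one_minus_sq_le:
  fixes u :: complex
  assumes "0 \<le> \<alpha>" "\<alpha> * norm u ^ 2 < 1"
  shows "norm (u / (1 - of_real \<alpha> * u^2)) \<le> norm u / (1 - \<alpha> * norm u ^ 2)"
proof -
  have "norm (of_real \<alpha> * u^2) = \<alpha> * norm u ^ 2" using assms(1) by (simp add: norm_mult norm_power)
  hence "1 - \<alpha> * norm u ^ 2 \<le> norm (1 - of_real \<alpha> * u^2)"
    by (smt (verit) norm_triangle_ineq2 norm_one)
  thus ?thesis unfolding norm_divide using assms(2) by (intro divide_left_mono) (auto intro!: mult_pos_pos)
qed

lemma norm_csqrt_one_plus_sub_one_le:
  fixes u :: complex
  assumes "norm u \<le> 1"
  shows "norm (csqrt (1 + u) - 1) \<le> 1 - sqrt (1 - norm u)"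
proof -
  define c where "c = csqrt (1 + u)"
  define v where "v = sqrt (1 - norm u)"
  have v0: "0 \<le> v" and v_sq: "v^2 = 1 - norm u" unfolding v_def using assms by auto
  have "Re (1 + u) \<ge> 1 - norm u" using abs_Re_le_cmod[of u] by simp
  moreover have "cmod (1 + u) \<ge> 1 - norm u" using norm_triangle_ineq2[of 1 "-u"] by simp
  ultimately have "Re c \<ge> v"
    unfolding c_def v_def by (simp only: csqrt.sel) (rule real_sqrt_le_mono, simp)
  hence "1 + v \<le> norm (c + 1)" using complex_Re_le_cmod[of "c + 1"] by simp
  moreover have "norm (c - 1) * norm (c + 1) = norm u"
  proof -
    have "(c - 1) * (c + 1) = u" unfolding c_def by (simp add: algebra_simps flip: power2_eq_square)
    thus ?thesis by (simp flip: norm_mult)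
  qed
  ultimately have "norm (c - 1) * (1 + v) \<le> norm u"
    using mult_left_mono[of "1 + v" "norm (c + 1)" "norm (c - 1)"] by simp
  also have "norm u = (1 - v) * (1 + v)" using v_sq by (simp add: algebra_simps power2_eq_square)
  finally have "norm (c - 1) \<le> 1 - v" by (rule mult_right_le_imp_le) (use v0 in linarith)
  thus ?thesis unfolding c_def v_def .
qed

lemma norm_exp_minus_one_le: "norm (exp z - 1) \<le> exp (norm z) - 1" for z :: complex
proof -
  have "(\<lambda>n. z ^ n /\<^sub>R fact n) sums exp z" by (rule exp_converges)
  hence s1: "(\<lambda>n. z ^ Suc n /\<^sub>R fact (Suc n)) sums (exp z - 1)"
    by (subst sums_Suc_iff) simp
  have "(\<lambda>n. norm z ^ n /\<^sub>R fact n) sums exp (norm z)" by (rule exp_converges)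
  hence s2: "(\<lambda>n. norm z ^ Suc n /\<^sub>R fact (Suc n)) sums (exp (norm z) - 1)"
    by (subst sums_Suc_iff) simp
  have norm_term: "norm (z ^ Suc n /\<^sub>R fact (Suc n)) = norm z ^ Suc n /\<^sub>R fact (Suc n)" for n
    by (simp add: norm_power norm_mult)
  have "norm (exp z - 1) = norm (\<Sum>n. z ^ Suc n /\<^sub>R fact (Suc n))" using sums_unique[OF s1] by simp
  also have "\<dots> \<le> (\<Sum>n. norm (z ^ Suc n /\<^sub>R fact (Suc n)))"
    by (rule summable_norm) (use s2 norm_term in \<open>simp add: sums_summable\<close>)
  also have "\<dots> = exp (norm z) - 1" using sums_unique[OF s2] norm_term by simp
  finally show ?thesis .
qed

lemma R_Ne_BSstar:
  assumes a0: "0 \<le> \<alpha>" and a1: "\<alpha> < 1"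
  shows "R_Ne (BSstar \<alpha>) = 4 / (3 + sqrt (9 + 16 * \<alpha>))"
proof -
  define q where "q = sqrt (9 + 16 * \<alpha>)"
  define r where "r = 4 / (3 + q)"
  have q3: "3 \<le> q" unfolding q_def using a0 by (simp add: real_le_rsqrt)
  have r_pos: "0 < r" and r_le1: "r \<le> 1" unfolding r_def using q3 by auto
  have r_root: "2 * \<alpha> * r^2 + 3 * r = 2"
  proof -
    have rq: "r * (3 + q) = 4" unfolding r_def using q3 by (simp add: field_simps)
    have "(2 * \<alpha> * r^2 + 3 * r - 2) * (3 + q)^2
          = 2 * \<alpha> * (r * (3 + q))^2 + 3 * (r * (3 + q)) * (3 + q) - 2 * (3 + q)^2"
      by (simp add: algebra_simps power2_eq_square)
    also have "\<dots> = 32 * \<alpha> + 18 - 2 * q^2" unfolding rq by (simp add: algebra_simps power2_eq_square)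
    also have "\<dots> = 0" unfolding q_def using a0 by simp
    finally show ?thesis using q3 by simp
  qed
  define \<phi> where "\<phi> = (\<lambda>z::complex. 1 + z / (1 - of_real \<alpha> * z ^ 2))"
  have small: "\<alpha> * norm u ^ 2 < 1" if "norm u < 1" for u :: complex
  proof -
    have "\<alpha> * norm u ^ 2 \<le> norm u ^ 2" using a0 a1 by (intro mult_left_le_one_le) auto
    also have "\<dots> < 1" using that by (simp add: power_less_one_iff)
    finally show ?thesis .
  qed
  have hol: "\<phi> holomorphic_on ball 0 1" unfolding \<phi>_def
  proof (intro holomorphic_intros)
    fix u :: complex assume "u \<in> ball 0 1"
    hence "norm (of_real \<alpha> * u^2) < 1" using small a0 by (simp add: norm_mult norm_power)
    thus "1 - of_real \<alpha> * u^2 \<noteq> 0" by (metis eq_iff_diff_eq_0 norm_one less_irrefl)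
  qed
  have near_one: "norm (\<phi> u - 1) < 2/3" if u: "norm u < r" for u
  proof -
    have "\<alpha> * norm u ^ 2 \<le> \<alpha> * r^2"
      using u a0 by (intro mult_left_mono power_mono) auto
    hence lt: "2 * \<alpha> * norm u ^ 2 + 3 * norm u < 2" using r_root u by linarith
    have "norm (\<phi> u - 1) \<le> norm u / (1 - \<alpha> * norm u ^ 2)"
      unfolding \<phi>_def using norm_div_one_minus_sq_le[OF a0 small] u r_le1 by simp
    also have "\<dots> < 2/3"
    proof -
      have "0 < 1 - \<alpha> * norm u ^ 2" using lt norm_ge_zero[of u] by linarith
      thus ?thesis using lt by (simp add: divide_less_eq)
    qed
    finally show ?thesis .
  qed
  have witness: "\<phi> (- of_real r) = 1/3"
  proof -
    have den: "1 - of_real \<alpha> * (- of_real r)^2 = (of_real (1 - \<alpha> * r^2) :: complex)" by simp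
    have "1 - \<alpha> * r^2 = 3 * r / 2" using r_root by simp
    hence "\<phi> (- of_real r) = 1 + (- of_real r) / of_real (3 * r / 2)"
      unfolding \<phi>_def den by (simp only:)
    thus ?thesis using r_pos by (simp add: field_simps)
  qed
  have sharp: "\<exists>z. norm z = r \<and> \<phi> z \<notin> OmegaNe"
  proof (intro exI conjI)
    show "norm (- of_real r :: complex) = r" using r_pos by simp
    show "\<phi> (- of_real r) \<notin> OmegaNe" unfolding witness by (rule one_third_notin_OmegaNe)
  qed
  have "R_Ne (Sstar \<phi>) = r"
    by (rule R_Ne_Sstar_eq_if_near_one[OF hol _ r_pos r_le1 near_one sharp]) (simp add: \<phi>_def)
  thus ?thesis unfolding BSstar_def \<phi>_def r_def q_def .
qed

lemma R_Ne_SLstar: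
  assumes \<alpha>_le: "\<alpha> \<le> 1/3"
  shows "R_Ne (SLstar \<alpha>) = 4 * (2 - 3 * \<alpha>) / (9 * (1 - \<alpha>) ^ 2)"
proof -
  define t where "t = (1 - 3 * \<alpha>) / (3 * (1 - \<alpha>))"
  define r where "r = 4 * (2 - 3 * \<alpha>) / (9 * (1 - \<alpha>) ^ 2)"
  have t0: "0 \<le> t" unfolding t_def using \<alpha>_le by simp
  have t_eq: "\<alpha> + (1 - \<alpha>) * t = 1/3" unfolding t_def using \<alpha>_le by (simp add: field_simps)
  have r_eq: "1 - r = t^2"
  proof -
    have d: "1 - \<alpha> \<noteq> 0" using \<alpha>_le by simp
    have rr: "r * (9 * (1 - \<alpha>) ^ 2) = 4 * (2 - 3 * \<alpha>)" unfolding r_def using d by simp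
    have tt: "t * (3 * (1 - \<alpha>)) = 1 - 3 * \<alpha>" unfolding t_def using d by simp
    have "(1 - r - t^2) * (9 * (1 - \<alpha>) ^ 2)
        = 9 * (1 - \<alpha>) ^ 2 - r * (9 * (1 - \<alpha>) ^ 2) - (t * (3 * (1 - \<alpha>)))^2"
      by (simp add: algebra_simps power2_eq_square)
    also have "\<dots> = 0" unfolding rr tt by (simp add: algebra_simps power2_eq_square)
    finally show ?thesis using d by simp
  qed
  have r_pos: "0 < r" unfolding r_def using \<alpha>_le by simp
  have r_le1: "r \<le> 1" using r_eq by (smt (verit) zero_le_power2)
  define \<phi> where "\<phi> = (\<lambda>z::complex. of_real \<alpha> + of_real (1 - \<alpha>) * csqrt (1 + z))"
  have hol: "\<phi> holomorphic_on ball 0 1" unfolding \<phi>_def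
  proof (intro holomorphic_intros)
    fix z :: complex assume "z \<in> ball 0 1"
    hence "0 < Re (1 + z)" using abs_Re_le_cmod[of z] by simp
    thus "1 + z \<notin> \<real>\<^sub>\<le>\<^sub>0" by (auto simp: nonpos_Reals_def dest!: arg_cong[where f=Re])
  qed
  have near_one: "norm (\<phi> u - 1) < 2/3" if u: "norm u < r" for u
  proof -
    have t_less: "t < sqrt (1 - norm u)" using u r_eq by (intro real_less_rsqrt) simp
    have "\<phi> u - 1 = of_real (1 - \<alpha>) * (csqrt (1 + u) - 1)" unfolding \<phi>_def by (simp add: algebra_simps)
    hence "norm (\<phi> u - 1) = (1 - \<alpha>) * norm (csqrt (1 + u) - 1)"
      using \<alpha>_le by (simp add: norm_mult del: of_real_diff)
    also have "\<dots> \<le> (1 - \<alpha>) * (1 - sqrt (1 - norm u))"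
      using norm_csqrt_one_plus_sub_one_le[of u] u r_le1 \<alpha>_le by (intro mult_left_mono) auto
    also have "\<dots> < (1 - \<alpha>) * (1 - t)" using t_less \<alpha>_le by simp
    also have "\<dots> = 2/3" using t_eq by (simp add: algebra_simps)
    finally show ?thesis .
  qed
  have witness: "\<phi> (- of_real r) = 1/3"
  proof -
    have "1 + (- of_real r) = (of_real (t^2) :: complex)" by (simp flip: r_eq)
    hence "csqrt (1 + (- of_real r)) = of_real t" using t0 by simp
    hence "\<phi> (- of_real r) = of_real (\<alpha> + (1 - \<alpha>) * t)" unfolding \<phi>_def by simp
    thus ?thesis unfolding t_eq by simp
  qed
  have sharp: "\<exists>z. norm z = r \<and> \<phi> z \<notin> OmegaNe"
  proof (intro exI conjI)
    show "norm (- of_real r :: complex) = r" using r_pos by simp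
    show "\<phi> (- of_real r) \<notin> OmegaNe" unfolding witness by (rule one_third_notin_OmegaNe)
  qed
  have "R_Ne (Sstar \<phi>) = r"
    by (rule R_Ne_Sstar_eq_if_near_one[OF hol _ r_pos r_le1 near_one sharp]) (simp add: \<phi>_def)
  thus ?thesis unfolding SLstar_def \<phi>_def r_def .
qed

lemma R_Ne_Sestar:
  assumes \<alpha>_le: "\<alpha> \<le> (3 * exp 1 - 5) / (3 * exp 1 - 3)"
  shows "R_Ne (Sestar \<alpha>) = ln ((5 - 3 * \<alpha>) / (3 - 3 * \<alpha>))"
proof -
  have denom_pos: "3 * exp (1::real) - 3 > 0" by simp
  hence \<alpha>_bound: "\<alpha> * (3 * exp 1 - 3) \<le> 3 * exp 1 - 5" using \<alpha>_le by (simp add: le_divide_eq)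
  hence \<alpha>_lt1: "\<alpha> < 1" using denom_pos by (smt (verit) mult_le_cancel_right1)
  define K where "K = (5 - 3 * \<alpha>) / (3 - 3 * \<alpha>)"
  define r where "r = ln K"
  have K_gt1: "1 < K" unfolding K_def using \<alpha>_lt1 by (simp add: field_simps)
  have K_le_e: "K \<le> exp 1" unfolding K_def using \<alpha>_lt1 \<alpha>_bound by (simp add: field_simps)
  have K_eq: "\<alpha> + (1 - \<alpha>) * K = 5/3" unfolding K_def using \<alpha>_lt1 by (simp add: field_simps)
  have exp_r: "exp r = K" unfolding r_def using K_gt1 by simp
  have r_pos: "0 < r" unfolding r_def using K_gt1 by simp
  have r_le1: "r \<le> 1" unfolding r_def using K_gt1 K_le_e ln_le_cancel_iff[of K "exp 1"] by simp
  define \<phi> where "\<phi> = (\<lambda>z::complex. of_real \<alpha> + of_real (1 - \<alpha>) * exp z)"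
  have hol: "\<phi> holomorphic_on ball 0 1" unfolding \<phi>_def by (intro holomorphic_intros)
  have near_one: "norm (\<phi> u - 1) < 2/3" if u: "norm u < r" for u
  proof -
    have "\<phi> u - 1 = of_real (1 - \<alpha>) * (exp u - 1)" unfolding \<phi>_def by (simp add: algebra_simps)
    hence "norm (\<phi> u - 1) = (1 - \<alpha>) * norm (exp u - 1)"
      using \<alpha>_lt1 by (simp add: norm_mult del: of_real_diff)
    also have "\<dots> \<le> (1 - \<alpha>) * (exp (norm u) - 1)"
      using \<alpha>_lt1 norm_exp_minus_one_le[of u] by (intro mult_left_mono) auto
    also have "\<dots> < (1 - \<alpha>) * (K - 1)" using u \<alpha>_lt1 by (simp flip: exp_r)
    also have "\<dots> = 2/3" using K_eq by (simp add: algebra_simps)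
    finally show ?thesis .
  qed
  have witness: "\<phi> (of_real r) = 5/3"
  proof -
    have "exp (of_real r) = (of_real K :: complex)" using exp_r by (metis exp_of_real)
    hence "\<phi> (of_real r) = of_real (\<alpha> + (1 - \<alpha>) * K)" by (simp add: \<phi>_def)
    thus ?thesis using K_eq by simp
  qed
  have sharp: "\<exists>z. norm z = r \<and> \<phi> z \<notin> OmegaNe"
  proof (intro exI conjI)
    show "norm (of_real r :: complex) = r" using r_pos by simp
    show "\<phi> (of_real r) \<notin> OmegaNe" unfolding witness by (rule five_thirds_notin_OmegaNe)
  qed
  have "R_Ne (Sstar \<phi>) = r"
    by (rule R_Ne_Sstar_eq_if_near_one[OF hol _ r_pos r_le1 near_one sharp]) (simp add: \<phi>_def)
  thus ?thesis unfolding Sestar_def \<phi>_def r_def K_def .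
qed

theorem mainTheorem6:
  shows "(\<forall>\<alpha>::real. 0 \<le> \<alpha> \<and> \<alpha> < 1 \<longrightarrow>
            R_Ne (BSstar \<alpha>) = 4 / (3 + sqrt (9 + 16 * \<alpha>)))
       \<and> (\<forall>\<alpha>::real. 0 \<le> \<alpha> \<and> \<alpha> \<le> 1/3 \<longrightarrow>
            R_Ne (SLstar \<alpha>) = 4 * (2 - 3 * \<alpha>) / (9 * (1 - \<alpha>) ^ 2))
       \<and> R_Ne (SLstar 0) = 8 / 9
       \<and> (\<forall>\<alpha>::real. 0 \<le> \<alpha> \<and> \<alpha> \<le> (3 * exp 1 - 5) / (3 * exp 1 - 3) \<longrightarrow>
            R_Ne (Sestar \<alpha>) = ln ((5 - 3 * \<alpha>) / (3 - 3 * \<alpha>)))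
       \<and> R_Ne (Sestar 0) = ln (5 / 3)"
proof (intro conjI allI impI)
  have "2 \<le> exp (1::real)" using exp_ge_add_one_self[of 1] by simp
  hence "0 \<le> (3 * exp 1 - 5) / (3 * exp (1::real) - 3)" by simp
  thus "R_Ne (Sestar 0) = ln (5 / 3)" using R_Ne_Sestar[of 0] by simp
  show "R_Ne (SLstar 0) = 8 / 9" using R_Ne_SLstar[of 0] by simp
qed (use R_Ne_BSstar R_Ne_SLstar R_Ne_Sestar in blast)+

end
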